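(* Let $(X,d,\mu)$ be an unbounded space of homogeneous type with geometric constants $\tau$ and $A$, let $0<\gamma<\tfrac1\tau$, $H\geq1$, and let $\mathcal{K}$ be a family of symmetric Markov kernels on $X$ with $\mathcal{K}\subset\mathcal{H}(\gamma,H)$. Then $\sup_{K\in\mathcal{K},\,x\in X}K(x,x)\mu(\{x\})\leq1$.
   Context: A quasi-distance on $X$ is a nonnegative symmetric function $d$ vanishing exactly on the diagonal with $d(x,z)\leq\tau[d(x,y)+d(y,z)]$, $\tau\geq1$; balls are $B(x,r)=\{y:d(x,y)<r\}$. $(X,d,\mu)$ is a space of homogeneous type if $\mu$ is a positive measure on a $\sigma$-algebra containing all balls with $0<\mu(B(x,2r))\leq A\mu(B(x,r))<\infty$; unbounded means $\mu(X)=\infty$. A symmetric Markov kernel is a nonnegative symmetric measurable $K$ on $X\times X$ with $\int_XK(x,y)d\mu(y)=1$ for all $x$. $K\in\mathcal{H}(\gamma,H)$ means $\sup_{\eta\in B(y,\gamma d(x,y))}K(x,\eta)\leq H\inf_{\eta\in B(y,\gamma d(x,y))}K(x,\eta)$ for all $x\neq y$. *)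

theory Defs
  imports "HOL-Analysis.Analysis"
begin

definition quasi_distance :: "'a set \<Rightarrow> ('a \<Rightarrow> 'a \<Rightarrow> real) \<Rightarrow> real \<Rightarrow> bool" where
  "quasi_distance X d \<tau> \<longleftrightarrow> \<tau> \<ge> 1 \<and>
     (\<forall>x\<in>X. \<forall>y\<in>X. d x y \<ge> 0 \<and> d x y = d y x \<and> (d x y = 0 \<longleftrightarrow> x = y)) \<and>
     (\<forall>x\<in>X. \<forall>y\<in>X. \<forall>z\<in>X. d x z \<le> \<tau> * (d x y + d y z))"

definition qball :: "'a set \<Rightarrow> ('a \<Rightarrow> 'a \<Rightarrow> real) \<Rightarrow> 'a \<Rightarrow> real \<Rightarrow> 'a set" where
  "qball X d x r = {y \<in> X. d x y < r}"

definition homogeneous_type :: "'a measure \<Rightarrow> ('a \<Rightarrow> 'a \<Rightarrow> real) \<Rightarrow> real \<Rightarrow> real \<Rightarrow> bool" where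
  "homogeneous_type M d \<tau> A \<longleftrightarrow> quasi_distance (space M) d \<tau> \<and>
     (\<forall>x\<in>space M. \<forall>r>0. qball (space M) d x r \<in> sets M \<and>
        0 < emeasure M (qball (space M) d x (2*r)) \<and>
        emeasure M (qball (space M) d x (2*r)) \<le> ennreal A * emeasure M (qball (space M) d x r) \<and>
        emeasure M (qball (space M) d x r) < \<infinity>)"

definition unbounded_space :: "'a measure \<Rightarrow> bool" where
  "unbounded_space M \<longleftrightarrow> emeasure M (space M) = \<infinity>"

definition symmetric_markov_kernel :: "'a measure \<Rightarrow> ('a \<Rightarrow> 'a \<Rightarrow> real) \<Rightarrow> bool" where
  "symmetric_markov_kernel M K \<longleftrightarrow>
     (\<lambda>(x,y). K x y) \<in> borel_measurable (M \<Otimes>\<^sub>M M) \<and>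
     (\<forall>x\<in>space M. \<forall>y\<in>space M. K x y \<ge> 0 \<and> K x y = K y x) \<and>
     (\<forall>x\<in>space M. (\<integral>\<^sup>+ y. ennreal (K x y) \<partial>M) = 1)"

definition kernel_class_H :: "'a measure \<Rightarrow> ('a \<Rightarrow> 'a \<Rightarrow> real) \<Rightarrow> real \<Rightarrow> real \<Rightarrow> ('a \<Rightarrow> 'a \<Rightarrow> real) \<Rightarrow> bool" where
  "kernel_class_H M d \<gamma> H K \<longleftrightarrow>
     (\<forall>x\<in>space M. \<forall>y\<in>space M. x \<noteq> y \<longrightarrow>
        (SUP \<eta>\<in>qball (space M) d y (\<gamma> * d x y). ereal (K x \<eta>))
          \<le> ereal H * (INF \<eta>\<in>qball (space M) d y (\<gamma> * d x y). ereal (K x \<eta>)))"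

end

theory Submission
  imports Defs
begin

lemma atom_le_nn_integral:
  "ennreal (f x) * emeasure M {x} \<le> (\<integral>\<^sup>+ y. ennreal (f y) \<partial>M)"
proof (cases "{x} \<in> sets M")
  case False
  then show ?thesis by (simp add: emeasure_notin_sets)
next
  case True
  then have "ennreal (f x) * emeasure M {x} = (\<integral>\<^sup>+ y. ennreal (f y) * indicator {x} y \<partial>M)"
    by simp
  also have "\<dots> \<le> (\<integral>\<^sup>+ y. ennreal (f y) \<partial>M)"
    by (intro nn_integral_mono) (auto simp: indicator_def)
  finally show ?thesis .
qed

lemma symmetric_markov_kernel_diagonal_atom_le_1:
  assumes "symmetric_markov_kernel M K" and "x \<in> space M"
  shows "ennreal (K x x) * emeasure M {x} \<le> 1"
  using atom_le_nn_integral[of "K x" x M] assms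
  unfolding symmetric_markov_kernel_def by simp

theorem lemma4p3:
  fixes M :: "'a measure" and d :: "'a \<Rightarrow> 'a \<Rightarrow> real" and \<tau> A \<gamma> H :: real
    and \<K> :: "('a \<Rightarrow> 'a \<Rightarrow> real) set"
  assumes "homogeneous_type M d \<tau> A"
    and "unbounded_space M"
    and "0 < \<gamma>" and "\<gamma> < 1 / \<tau>"
    and "H \<ge> 1"
    and "\<forall>K\<in>\<K>. symmetric_markov_kernel M K"
    and "\<forall>K\<in>\<K>. kernel_class_H M d \<gamma> H K"
  shows "(SUP (K, x)\<in>\<K> \<times> space M. ennreal (K x x) * emeasure M {x}) \<le> 1"
proof (rule SUP_least, clarify)
  fix K x assume "K \<in> \<K>" "x \<in> space M"
  then show "ennreal (K x x) * emeasure M {x} \<le> 1"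
    using assms(6) symmetric_markov_kernel_diagonal_atom_le_1[of M K x] by blast
qed

end
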